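(* Let $\mathrm{M}=\langle e_1+I,\ e_2+I,\ -I\rangle$, where $e_1,e_2$ are the standard basis vectors of $E^2$. Then $\Omega:\mathrm{Aff}(\mathrm{M})\to\mathrm{Out}(\mathrm{M})$ is an isomorphism.
   Context: Affine maps of $E^2$ are written $a+A$ ($x\mapsto a+Ax$); $a+I$ is translation by $a$. For a 2-space group $\mathrm{M}$, let $N_A(\mathrm{M})$ be its normalizer in the affine group of $E^2$. Each $a+A\in N_A(\mathrm{M})$ induces an affinity $(a+A)_\star:\mathrm{M}x\mapsto\mathrm{M}(a+Ax)$ of the flat orbifold $E^2/\mathrm{M}$; $\mathrm{Aff}(\mathrm{M})$ is the group of all such affinities. $\Omega:\mathrm{Aff}(\mathrm{M})\to\mathrm{Out}(\mathrm{M})$ sends $(a+A)_\star$ to the outer automorphism class of the automorphism $g\mapsto (a+A)g(a+A)^{-1}$ of $\mathrm{M}$. *)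

theory Defs
  imports "HOL-Analysis.Analysis" "HOL-Algebra.Algebra"
begin

definition aff :: "real^2 \<Rightarrow> real^2^2 \<Rightarrow> (real^2 \<Rightarrow> real^2)" where
  "aff a A = (\<lambda>x. a + A *v x)"

definition AffGroup :: "(real^2 \<Rightarrow> real^2) monoid" where
  "AffGroup = \<lparr>carrier = {aff a A | a A. invertible A}, mult = (\<circ>), one = id\<rparr>"

definition e1 :: "real^2" where "e1 = axis 1 1"
definition e2 :: "real^2" where "e2 = axis 2 1"

definition Mp2 :: "(real^2 \<Rightarrow> real^2) set" where
  "Mp2 = generate AffGroup {aff e1 (mat 1), aff e2 (mat 1), aff 0 (- mat 1)}"

definition MGroup :: "(real^2 \<Rightarrow> real^2) set \<Rightarrow> (real^2 \<Rightarrow> real^2) monoid" where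
  "MGroup M = AffGroup\<lparr>carrier := M\<rparr>"

definition normalizerA :: "(real^2 \<Rightarrow> real^2) set \<Rightarrow> (real^2 \<Rightarrow> real^2) set" where
  "normalizerA M = {g \<in> carrier AffGroup.
      (\<lambda>m. g \<otimes>\<^bsub>AffGroup\<^esub> m \<otimes>\<^bsub>AffGroup\<^esub> inv\<^bsub>AffGroup\<^esub> g) ` M = M}"

definition orbitM :: "(real^2 \<Rightarrow> real^2) set \<Rightarrow> real^2 \<Rightarrow> (real^2) set" where
  "orbitM M x = {m x | m. m \<in> M}"

definition Orbits :: "(real^2 \<Rightarrow> real^2) set \<Rightarrow> (real^2) set set" where
  "Orbits M = range (orbitM M)"

text \<open>Induced affinity (a+A)_* : Mx |-> M(a+Ax).\<close>
definition induced :: "(real^2 \<Rightarrow> real^2) set \<Rightarrow> (real^2 \<Rightarrow> real^2) \<Rightarrow> ((real^2) set \<Rightarrow> (real^2) set)" where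
  "induced M g = (\<lambda>Q \<in> Orbits M. orbitM M (g (SOME x. x \<in> Q)))"

definition AffOrb :: "(real^2 \<Rightarrow> real^2) set \<Rightarrow> ((real^2) set \<Rightarrow> (real^2) set) monoid" where
  "AffOrb M = \<lparr>carrier = induced M ` normalizerA M,
               mult = (\<lambda>\<phi> \<psi>. compose (Orbits M) \<phi> \<psi>),
               one = (\<lambda>Q \<in> Orbits M. Q)\<rparr>"

definition Inn :: "('a, 'b) monoid_scheme \<Rightarrow> ('a \<Rightarrow> 'a) set" where
  "Inn G = {(\<lambda>x \<in> carrier G. h \<otimes>\<^bsub>G\<^esub> x \<otimes>\<^bsub>G\<^esub> inv\<^bsub>G\<^esub> h) | h. h \<in> carrier G}"

definition Out :: "('a, 'b) monoid_scheme \<Rightarrow> ('a \<Rightarrow> 'a) set monoid" where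
  "Out G = AutoGroup G Mod Inn G"

definition conjAut :: "(real^2 \<Rightarrow> real^2) set \<Rightarrow> (real^2 \<Rightarrow> real^2) \<Rightarrow> ((real^2 \<Rightarrow> real^2) \<Rightarrow> (real^2 \<Rightarrow> real^2))" where
  "conjAut M g = (\<lambda>m \<in> M. g \<otimes>\<^bsub>AffGroup\<^esub> m \<otimes>\<^bsub>AffGroup\<^esub> inv\<^bsub>AffGroup\<^esub> g)"

text \<open>Omega: (a+A)_* |-> outer class of conjugation by a+A (for any representative a+A).\<close>
definition Omega :: "(real^2 \<Rightarrow> real^2) set \<Rightarrow> ((real^2) set \<Rightarrow> (real^2) set) \<Rightarrow> ((real^2 \<Rightarrow> real^2) \<Rightarrow> (real^2 \<Rightarrow> real^2)) set" where
  "Omega M \<phi> = Inn (MGroup M) #>\<^bsub>AutoGroup (MGroup M)\<^esub>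
      conjAut M (SOME g. g \<in> normalizerA M \<and> induced M g = \<phi>)"

end

(*
  Aff(M) and Out(M) are both quotients of the affine normalizer N of M, and Omega is the
  resulting bijection between them.  The map g |-> g_* from N onto Aff(M) has kernel M,
  because an affinity moving every point within its M-orbit has linear part +-I and
  integral translation part.  The map from N to Out(M) sending g to the class of
  conjugation by g also has kernel M: conjugation by g is inner iff g lies in M C(M),
  and the centralizer C(M) of M in the affine group is trivial.  This second map is
  onto because every automorphism phi of M is conjugation by an affinity: phi preserves
  involutions, so it maps translations to translations, say e_i + I to c_i + I, and the
  half-turn -I to a half-turn b - I; then phi agrees on the generators, hence on M, with
  conjugation by b/2 + A, where A has columns c_1, c_2.
*)
theory Submission
  imports Defs
begin

section \<open>Automorphism groups\<close>

lemma (in group) hom_eq_on_generate: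
  assumes "group H" and f: "f \<in> hom G H" and g: "g \<in> hom G H"
    and "S \<subseteq> carrier G" and "\<And>s. s \<in> S \<Longrightarrow> f s = g s" and "x \<in> generate G S"
  shows "f x = g x"
proof -
  interpret f: group_hom G H f
    using \<open>group H\<close> f by (simp add: group_hom_def group_hom_axioms_def)
  interpret g: group_hom G H g
    using \<open>group H\<close> g by (simp add: group_hom_def group_hom_axioms_def)
  have "subgroup {x \<in> carrier G. f x = g x} G"
    by (rule subgroupI) auto
  then have "generate G S \<subseteq> {x \<in> carrier G. f x = g x}"
    using assms by (intro generate_subgroup_incl) auto
  then show ?thesis
    using \<open>x \<in> generate G S\<close> by blast
qed

lemma mult_AutoGroup:
  "f \<in> auto G \<Longrightarrow> g \<in> auto G \<Longrightarrow> f \<otimes>\<^bsub>AutoGroup G\<^esub> g = compose (carrier G) f g"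
  by (simp add: AutoGroup_def BijGroup_def auto_def)

lemma Inn_eq_image: "Inn G = (\<lambda>h. \<lambda>x\<in>carrier G. h \<otimes>\<^bsub>G\<^esub> x \<otimes>\<^bsub>G\<^esub> inv\<^bsub>G\<^esub> h) ` carrier G"
  by (auto simp: Inn_def)

lemma (in group) inner_auto:
  assumes "h \<in> carrier G"
  shows "(\<lambda>x\<in>carrier G. h \<otimes> x \<otimes> inv h) \<in> auto G"
  using assms conjugation_is_bij[OF assms]
  by (auto simp: auto_def hom_def Bij_def m_assoc) (simp add: m_assoc[symmetric])

lemma (in group) auto_conj_inner:
  assumes \<phi>: "\<phi> \<in> auto G" and h: "h \<in> carrier G"
  shows "\<phi> \<otimes>\<^bsub>AutoGroup G\<^esub> (\<lambda>x\<in>carrier G. h \<otimes> x \<otimes> inv h) \<otimes>\<^bsub>AutoGroup G\<^esub> inv\<^bsub>AutoGroup G\<^esub> \<phi>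
    = (\<lambda>x\<in>carrier G. \<phi> h \<otimes> x \<otimes> inv (\<phi> h))"
proof -
  interpret Aut: group "AutoGroup G"
    by (rule AutoGroup)
  interpret \<phi>: group_hom G G \<phi>
    using \<phi> by (simp add: group_hom_def group_hom_axioms_def auto_def)
  have "compose (carrier G) \<phi> (\<lambda>x\<in>carrier G. h \<otimes> x \<otimes> inv h)
      = compose (carrier G) (\<lambda>x\<in>carrier G. \<phi> h \<otimes> x \<otimes> inv (\<phi> h)) \<phi>"
    using h by (auto simp: compose_def fun_eq_iff)
  then have "\<phi> \<otimes>\<^bsub>AutoGroup G\<^esub> (\<lambda>x\<in>carrier G. h \<otimes> x \<otimes> inv h)
      = (\<lambda>x\<in>carrier G. \<phi> h \<otimes> x \<otimes> inv (\<phi> h)) \<otimes>\<^bsub>AutoGroup G\<^esub> \<phi>"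
    using \<phi> h inner_auto by (simp add: mult_AutoGroup)
  moreover have "(\<lambda>x\<in>carrier G. \<phi> h \<otimes> x \<otimes> inv (\<phi> h)) \<in> carrier (AutoGroup G)"
    "\<phi> \<in> carrier (AutoGroup G)"
    using \<phi> h inner_auto by (simp_all add: AutoGroup_def)
  ultimately show ?thesis
    by (simp add: Aut.m_assoc)
qed

lemma (in group) Inn_normal: "Inn G \<lhd> AutoGroup G"
proof -
  interpret Bij: group "BijGroup (carrier G)"
    by (rule group_BijGroup)
  interpret Aut: group "AutoGroup G"
    by (rule AutoGroup)
  have "group_hom G (BijGroup (carrier G)) (\<lambda>h. \<lambda>x\<in>carrier G. h \<otimes> x \<otimes> inv h)"
    using conjugation_is_hom by (simp add: group_hom_def group_hom_axioms_def)
  then have "subgroup (Inn G) (BijGroup (carrier G))"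
    unfolding Inn_eq_image by (rule group_hom.img_is_subgroup)
  then have "subgroup (Inn G) (AutoGroup G)"
    unfolding AutoGroup_def
    using inner_auto by (intro Bij.subgroup_incl subgroup_auto) (auto simp: Inn_eq_image)
  moreover have "\<phi> \<otimes>\<^bsub>AutoGroup G\<^esub> \<iota> \<otimes>\<^bsub>AutoGroup G\<^esub> inv\<^bsub>AutoGroup G\<^esub> \<phi> \<in> Inn G"
    if \<phi>: "\<phi> \<in> carrier (AutoGroup G)" and "\<iota> \<in> Inn G" for \<phi> \<iota>
  proof -
    obtain h where h: "h \<in> carrier G" "\<iota> = (\<lambda>x\<in>carrier G. h \<otimes> x \<otimes> inv h)"
      using \<open>\<iota> \<in> Inn G\<close> by (auto simp: Inn_def)
    have "\<phi> h \<in> carrier G"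
      using \<phi> h by (auto simp: AutoGroup_def auto_def hom_def)
    moreover have "\<phi> \<otimes>\<^bsub>AutoGroup G\<^esub> \<iota> \<otimes>\<^bsub>AutoGroup G\<^esub> inv\<^bsub>AutoGroup G\<^esub> \<phi>
        = (\<lambda>x\<in>carrier G. \<phi> h \<otimes> x \<otimes> inv (\<phi> h))"
      using auto_conj_inner \<phi> h by (simp add: AutoGroup_def)
    ultimately show ?thesis
      unfolding Inn_eq_image by (simp add: image_eqI[where x = "\<phi> h"])
  qed
  ultimately show ?thesis
    by (simp add: Aut.normal_invI)
qed

lemma (in group) auto_eq_one_iff:
  assumes "\<phi> \<in> auto G" and "x \<in> carrier G"
  shows "\<phi> x = \<one> \<longleftrightarrow> x = \<one>"
proof -
  interpret \<phi>: group_hom G G \<phi>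
    using assms(1) by (simp add: group_hom_def group_hom_axioms_def auto_def)
  have "inj_on \<phi> (carrier G)"
    using assms(1) by (simp add: auto_def Bij_def bij_betw_def)
  then show ?thesis
    using assms(2) by (metis \<phi>.hom_one inj_onD one_closed)
qed

lemma (in group) auto_square_eq_one_iff:
  assumes "\<phi> \<in> auto G" and "x \<in> carrier G"
  shows "\<phi> x \<otimes> \<phi> x = \<one> \<longleftrightarrow> x \<otimes> x = \<one>"
proof -
  have "\<phi> x \<otimes> \<phi> x = \<phi> (x \<otimes> x)"
    using assms by (simp add: auto_def hom_mult[symmetric])
  then show ?thesis
    using auto_eq_one_iff[OF assms(1) m_closed[OF assms(2) assms(2)]] by simp
qed

section \<open>The affine group of the plane\<close>

lemma vec2_eq_iff: "(x::real^2) = y \<longleftrightarrow> x$1 = y$1 \<and> x$2 = y$2"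
  by (simp add: vec_eq_iff forall_2)

lemma matrix_vector_mult_nth_2:
  "((A::real^2^2) *v x) $ 1 = A$1$1 * x$1 + A$1$2 * x$2"
  "((A::real^2^2) *v x) $ 2 = A$2$1 * x$1 + A$2$2 * x$2"
  by (simp_all add: matrix_vector_mult_def sum_2)

lemma e1_nth [simp]: "e1$1 = 1" "e1$2 = 0"
  by (simp_all add: e1_def axis_def)

lemma e2_nth [simp]: "e2$1 = 0" "e2$2 = 1"
  by (simp_all add: e2_def axis_def)

lemma e1_neq_0: "e1 \<noteq> 0" and e2_neq_0: "e2 \<noteq> 0"
  by (simp_all add: vec2_eq_iff)

lemma aff_compose: "aff a A \<circ> aff b B = aff (a + A *v b) (A ** B)"
  by (simp add: aff_def fun_eq_iff matrix_vector_mul_assoc matrix_vector_right_distrib add.assoc)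

lemma carrier_AffGroup: "carrier AffGroup = {aff a A | a A. invertible A}"
  by (simp add: AffGroup_def)

lemma mult_AffGroup [simp]: "mult AffGroup = (\<circ>)"
  by (simp add: AffGroup_def)

lemma one_AffGroup [simp]: "one AffGroup = id"
  by (simp add: AffGroup_def)

lemma group_AffGroup: "group AffGroup"
proof (rule groupI)
  fix f g assume "f \<in> carrier AffGroup" "g \<in> carrier AffGroup"
  then show "f \<otimes>\<^bsub>AffGroup\<^esub> g \<in> carrier AffGroup"
    unfolding carrier_AffGroup by (auto simp: aff_compose) (blast intro: invertible_mult)
next
  have "id = aff 0 (mat 1)" "invertible (mat 1 :: real^2^2)"
    by (auto simp: aff_def fun_eq_iff invertible_def)
  then show "\<one>\<^bsub>AffGroup\<^esub> \<in> carrier AffGroup"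
    unfolding carrier_AffGroup one_AffGroup by blast
next
  fix f assume "f \<in> carrier AffGroup"
  then obtain a A A' where f: "f = aff a A" and A': "A ** A' = mat 1" "A' ** A = mat 1"
    by (auto simp: carrier_AffGroup invertible_def)
  have "aff (- (A' *v a)) A' \<circ> f = id"
    using A' by (simp add: f aff_compose) (simp add: aff_def fun_eq_iff)
  moreover have "invertible A'"
    using A' invertible_def by blast
  ultimately show "\<exists>g\<in>carrier AffGroup. g \<otimes>\<^bsub>AffGroup\<^esub> f = \<one>\<^bsub>AffGroup\<^esub>"
    by (auto simp: carrier_AffGroup)
qed (simp_all add: o_assoc)

interpretation AG: group AffGroup
  by (rule group_AffGroup)

abbreviation inv_aff :: "(real^2 \<Rightarrow> real^2) \<Rightarrow> (real^2 \<Rightarrow> real^2)"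
  where "inv_aff g \<equiv> inv\<^bsub>AffGroup\<^esub> g"

lemma inv_aff_apply_left [simp]: "g \<in> carrier AffGroup \<Longrightarrow> inv_aff g (g x) = x"
  using AG.l_inv[of g] by (metis comp_apply id_apply mult_AffGroup one_AffGroup)

lemma inv_aff_apply_right [simp]: "g \<in> carrier AffGroup \<Longrightarrow> g (inv_aff g x) = x"
  using AG.r_inv[of g] by (metis comp_apply id_apply mult_AffGroup one_AffGroup)

lemma MGroup_simps [simp]:
  "carrier (MGroup M) = M" "mult (MGroup M) = (\<circ>)" "one (MGroup M) = id"
  by (simp_all add: MGroup_def AffGroup_def)

lemma auto_MGroup_closed: "\<phi> \<in> auto (MGroup M) \<Longrightarrow> m \<in> M \<Longrightarrow> \<phi> m \<in> M"
  by (auto simp: auto_def hom_def)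

section \<open>Normalizers, inner automorphisms and orbit spaces\<close>

lemma normalizer_carrier: "g \<in> normalizerA M \<Longrightarrow> g \<in> carrier AffGroup"
  by (simp add: normalizerA_def)

lemma normalizer_image: "g \<in> normalizerA M \<Longrightarrow> (\<lambda>m. g \<circ> m \<circ> inv_aff g) ` M = M"
  by (simp add: normalizerA_def)

lemma normalizer_conj_closed: "g \<in> normalizerA M \<Longrightarrow> m \<in> M \<Longrightarrow> g \<circ> m \<circ> inv_aff g \<in> M"
  using normalizer_image by blast

lemma normalizer_comp_closed:
  assumes g: "g \<in> normalizerA M" and h: "h \<in> normalizerA M"
  shows "g \<circ> h \<in> normalizerA M"
proof -
  have gc: "g \<in> carrier AffGroup" and hc: "h \<in> carrier AffGroup"
    using g h by (auto intro: normalizer_carrier)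
  have conj: "(\<lambda>m. g \<circ> h \<circ> m \<circ> inv_aff (g \<circ> h))
      = (\<lambda>m. g \<circ> m \<circ> inv_aff g) \<circ> (\<lambda>m. h \<circ> m \<circ> inv_aff h)"
    using AG.inv_mult_group[OF gc hc] by (simp add: fun_eq_iff)
  have "(\<lambda>m. g \<circ> h \<circ> m \<circ> inv_aff (g \<circ> h)) ` M
      = (\<lambda>m. g \<circ> m \<circ> inv_aff g) ` (\<lambda>m. h \<circ> m \<circ> inv_aff h) ` M"
    unfolding conj image_comp ..
  also have "\<dots> = M"
    using normalizer_image[OF g] normalizer_image[OF h] by simp
  finally show ?thesis
    using AG.m_closed[OF gc hc] by (simp add: normalizerA_def)
qed

lemma conjAut_apply: "m \<in> M \<Longrightarrow> conjAut M g m = g \<circ> m \<circ> inv_aff g"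
  by (simp add: conjAut_def)

definition affine_centralizer :: "(real^2 \<Rightarrow> real^2) set \<Rightarrow> (real^2 \<Rightarrow> real^2) set" where
  "affine_centralizer M = {k \<in> carrier AffGroup. \<forall>m\<in>M. k \<circ> m = m \<circ> k}"

definition orbit_preserving_affinities :: "(real^2 \<Rightarrow> real^2) set \<Rightarrow> (real^2 \<Rightarrow> real^2) set" where
  "orbit_preserving_affinities M = {k \<in> carrier AffGroup. \<forall>y. k y \<in> orbitM M y}"

lemma inj_on_conjAut:
  assumes centralizer: "affine_centralizer M \<subseteq> {id}"
  shows "inj_on (conjAut M) (normalizerA M)"
proof
  fix g h assume g: "g \<in> normalizerA M" and h: "h \<in> normalizerA M"
    and eq: "conjAut M g = conjAut M h"
  have gc: "g \<in> carrier AffGroup" and hc: "h \<in> carrier AffGroup"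
    using g h normalizer_carrier by auto
  define k where "k = inv_aff h \<circ> g"
  have "k \<in> carrier AffGroup"
    using AG.m_closed[OF AG.inv_closed[OF hc] gc] by (simp add: k_def)
  moreover have "k \<circ> m = m \<circ> k" if "m \<in> M" for m
  proof -
    have "g \<circ> m \<circ> inv_aff g = h \<circ> m \<circ> inv_aff h"
      using eq that by (metis conjAut_apply)
    then have "(g \<circ> m \<circ> inv_aff g) (g x) = (h \<circ> m \<circ> inv_aff h) (g x)" for x
      by simp
    then have "g (m x) = h (m (k x))" for x
      using gc by (simp add: k_def)
    then show ?thesis
      using hc by (simp add: k_def fun_eq_iff)
  qed
  ultimately have "k = id"
    using centralizer by (auto simp: affine_centralizer_def)
  then show "g = h"
    using hc by (simp add: k_def fun_eq_iff) (metis inv_aff_apply_right)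
qed

lemma orbit_in_Orbits [simp]: "orbitM M x \<in> Orbits M"
  by (simp add: Orbits_def)

lemma induced_outside_Orbits [simp]: "Q \<notin> Orbits M \<Longrightarrow> induced M g Q = undefined"
  by (simp add: induced_def)

locale affine_subgroup =
  fixes M :: "(real^2 \<Rightarrow> real^2) set"
  assumes subgroup: "subgroup M AffGroup"
begin

lemma mem_carrier: "m \<in> M \<Longrightarrow> m \<in> carrier AffGroup"
  using subgroup by (rule subgroup.mem_carrier)

lemma comp_closed: "m \<in> M \<Longrightarrow> n \<in> M \<Longrightarrow> m \<circ> n \<in> M"
  using subgroup.m_closed[OF subgroup] by fastforce

lemma inv_closed: "m \<in> M \<Longrightarrow> inv_aff m \<in> M"
  using subgroup by (rule subgroup.m_inv_closed)

lemma id_closed: "id \<in> M"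
  using subgroup.one_closed[OF subgroup] by simp

lemma group_MGroup: "group (MGroup M)"
  unfolding MGroup_def using subgroup by (rule AG.subgroup_imp_group)

lemma inv_MGroup: "m \<in> M \<Longrightarrow> inv\<^bsub>MGroup M\<^esub> m = inv_aff m"
  unfolding MGroup_def using subgroup by (rule AG.m_inv_consistent)

lemma mem_normalizer: "m \<in> M \<Longrightarrow> m \<in> normalizerA M"
proof -
  assume m: "m \<in> M"
  have "(\<lambda>n. m \<circ> n \<circ> inv_aff m) ` M \<subseteq> M"
    using m by (auto intro!: comp_closed inv_closed)
  moreover have "n = m \<circ> (inv_aff m \<circ> n \<circ> m) \<circ> inv_aff m" for n
    using mem_carrier[OF m] by (simp add: fun_eq_iff)
  then have "M \<subseteq> (\<lambda>n. m \<circ> n \<circ> inv_aff m) ` M"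
    using m by (auto intro!: comp_closed inv_closed)
  ultimately show "m \<in> normalizerA M"
    using mem_carrier[OF m] by (auto simp: normalizerA_def)
qed

lemma conjAut_auto:
  assumes g: "g \<in> normalizerA M"
  shows "conjAut M g \<in> auto (MGroup M)"
proof -
  have gc: "g \<in> carrier AffGroup"
    using g by (rule normalizer_carrier)
  then have "inj_on (conjAut M g) M"
    by (auto simp: inj_on_def conjAut_apply fun_eq_iff) (metis inv_aff_apply_left)
  moreover have "conjAut M g ` M = M"
    using normalizer_image[OF g] by (simp add: conjAut_apply cong: image_cong)
  moreover have "conjAut M g (m \<circ> n) = conjAut M g m \<circ> conjAut M g n" if "m \<in> M" "n \<in> M" for m n
    using that gc by (simp add: conjAut_apply comp_closed fun_eq_iff)
  ultimately show ?thesis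
    by (auto simp: auto_def hom_def Bij_def bij_betw_def conjAut_def)
qed

lemma conjAut_in_AutoGroup: "g \<in> normalizerA M \<Longrightarrow> conjAut M g \<in> carrier (AutoGroup (MGroup M))"
  using conjAut_auto by (simp add: AutoGroup_def)

lemma conjAut_compose:
  assumes g: "g \<in> normalizerA M" and h: "h \<in> normalizerA M"
  shows "conjAut M g \<otimes>\<^bsub>AutoGroup (MGroup M)\<^esub> conjAut M h = conjAut M (g \<circ> h)"
proof -
  have "compose M (conjAut M g) (conjAut M h) m = conjAut M (g \<circ> h) m" for m
    using g h AG.inv_mult_group[OF normalizer_carrier[OF g] normalizer_carrier[OF h]]
    by (cases "m \<in> M")
      (auto simp: compose_def conjAut_apply normalizer_conj_closed conjAut_def o_assoc)
  then show ?thesis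
    using conjAut_auto[OF g] conjAut_auto[OF h] by (simp add: mult_AutoGroup fun_eq_iff)
qed

lemma Inn_MGroup: "Inn (MGroup M) = conjAut M ` M"
  unfolding Inn_eq_image MGroup_simps
  by (rule image_cong) (simp_all add: conjAut_def inv_MGroup)

abbreviation outer_class :: "(real^2 \<Rightarrow> real^2) \<Rightarrow> ((real^2 \<Rightarrow> real^2) \<Rightarrow> (real^2 \<Rightarrow> real^2)) set"
  where "outer_class g \<equiv> Inn (MGroup M) #>\<^bsub>AutoGroup (MGroup M)\<^esub> conjAut M g"

lemma outer_class_eq_iff_conjAut:
  assumes g: "g \<in> normalizerA M" and h: "h \<in> normalizerA M"
  shows "outer_class g = outer_class h \<longleftrightarrow> (\<exists>m\<in>M. conjAut M g = conjAut M (m \<circ> h))"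
proof -
  interpret Aut: group "AutoGroup (MGroup M)"
    using group_MGroup by (rule group.AutoGroup)
  have Inn_sub: "subgroup (Inn (MGroup M)) (AutoGroup (MGroup M))"
    using group.Inn_normal[OF group_MGroup] by (rule normal_imp_subgroup)
  have "outer_class g = outer_class h \<longleftrightarrow> conjAut M g \<in> outer_class h"
    using Aut.repr_independence[OF _ conjAut_in_AutoGroup[OF h] Inn_sub]
      Aut.rcos_self[OF conjAut_in_AutoGroup[OF g] Inn_sub] by blast
  also have "\<dots> \<longleftrightarrow> (\<exists>m\<in>M. conjAut M g = conjAut M (m \<circ> h))"
    using h by (auto simp: r_coset_def Inn_MGroup conjAut_compose mem_normalizer)
  finally show ?thesis .
qed

lemma outer_class_eqI:
  assumes g: "g \<in> normalizerA M" and h: "h \<in> normalizerA M" and "g \<circ> inv_aff h \<in> M"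
  shows "outer_class g = outer_class h"
proof -
  have "g = g \<circ> inv_aff h \<circ> h"
    using normalizer_carrier[OF h] by (simp add: fun_eq_iff)
  then show ?thesis
    using outer_class_eq_iff_conjAut[OF g h] \<open>g \<circ> inv_aff h \<in> M\<close> by metis
qed

lemma outer_class_eq_iff:
  assumes centralizer: "affine_centralizer M \<subseteq> {id}"
    and g: "g \<in> normalizerA M" and h: "h \<in> normalizerA M"
  shows "outer_class g = outer_class h \<longleftrightarrow> g \<circ> inv_aff h \<in> M"
proof
  assume "outer_class g = outer_class h"
  then obtain m where m: "m \<in> M" "conjAut M g = conjAut M (m \<circ> h)"
    using outer_class_eq_iff_conjAut[OF g h] by blast
  then have "g = m \<circ> h"
    using inj_onD[OF inj_on_conjAut[OF centralizer]] g normalizer_comp_closed mem_normalizer h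
    by blast
  moreover have "m \<circ> h \<circ> inv_aff h = m"
    using normalizer_carrier[OF h] by (simp add: fun_eq_iff)
  ultimately show "g \<circ> inv_aff h \<in> M"
    using m by simp
qed (rule outer_class_eqI[OF g h])

lemma orbit_self: "x \<in> orbitM M x"
proof -
  have "x = id x"
    by simp
  then show ?thesis
    using id_closed unfolding orbitM_def by blast
qed

lemma mem_orbitI: "m \<in> M \<Longrightarrow> m x \<in> orbitM M x"
  by (auto simp: orbitM_def)

lemma orbit_eq:
  assumes "y \<in> orbitM M x"
  shows "orbitM M y = orbitM M x"
proof -
  obtain m where m: "m \<in> M" "y = m x"
    using assms by (auto simp: orbitM_def)
  have "n y \<in> orbitM M x" if "n \<in> M" for n
    using mem_orbitI[OF comp_closed[OF that m(1)], of x] m(2) by simp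
  moreover have "n x \<in> orbitM M y" if "n \<in> M" for n
    using mem_orbitI[OF comp_closed[OF that inv_closed[OF m(1)]], of y] m mem_carrier by simp
  ultimately show ?thesis
    unfolding orbitM_def by blast
qed

lemma orbit_eq_iff: "orbitM M x = orbitM M y \<longleftrightarrow> x \<in> orbitM M y"
  using orbit_eq orbit_self by metis

lemma induced_orbit:
  assumes g: "g \<in> normalizerA M"
  shows "induced M g (orbitM M x) = orbitM M (g x)"
proof -
  define y where "y = (SOME y. y \<in> orbitM M x)"
  have "y \<in> orbitM M x"
    unfolding y_def using orbit_self by (rule someI)
  then obtain m where m: "m \<in> M" "y = m x"
    by (auto simp: orbitM_def)
  have "g y = (g \<circ> m \<circ> inv_aff g) (g x)"
    using m normalizer_carrier[OF g] by simp
  then have "g y \<in> orbitM M (g x)"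
    using normalizer_conj_closed[OF g m(1)] unfolding orbitM_def by blast
  then show ?thesis
    by (simp add: induced_def y_def orbit_eq)
qed

lemma induced_eqI:
  assumes "\<And>x. induced M g (orbitM M x) = induced M h (orbitM M x)"
  shows "induced M g = induced M h"
proof
  fix Q
  show "induced M g Q = induced M h Q"
    using assms by (cases "Q \<in> Orbits M") (auto simp: Orbits_def)
qed

lemma induced_compose:
  assumes g: "g \<in> normalizerA M" and h: "h \<in> normalizerA M"
  shows "compose (Orbits M) (induced M g) (induced M h) = induced M (g \<circ> h)"
proof
  fix Q
  show "compose (Orbits M) (induced M g) (induced M h) Q = induced M (g \<circ> h) Q"
  proof (cases "Q \<in> Orbits M")
    case True
    then obtain x where "Q = orbitM M x"
      by (auto simp: Orbits_def)
    then show ?thesis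
      using g h normalizer_comp_closed[OF g h] by (simp add: compose_def induced_orbit)
  qed (simp add: compose_def)
qed

lemma induced_eq_iff_orbit_eq:
  assumes g: "g \<in> normalizerA M" and h: "h \<in> normalizerA M"
  shows "induced M g = induced M h \<longleftrightarrow> (\<forall>x. orbitM M (g x) = orbitM M (h x))"
proof
  assume "induced M g = induced M h"
  then show "\<forall>x. orbitM M (g x) = orbitM M (h x)"
    by (simp flip: induced_orbit[OF g] induced_orbit[OF h])
next
  assume "\<forall>x. orbitM M (g x) = orbitM M (h x)"
  then show "induced M g = induced M h"
    by (intro induced_eqI) (simp add: induced_orbit g h)
qed

lemma induced_eq_iff:
  assumes orbit_preserving: "orbit_preserving_affinities M \<subseteq> M"
    and g: "g \<in> normalizerA M" and h: "h \<in> normalizerA M"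
  shows "induced M g = induced M h \<longleftrightarrow> g \<circ> inv_aff h \<in> M"
proof -
  have gc: "g \<in> carrier AffGroup" and hc: "h \<in> carrier AffGroup"
    using g h by (auto intro: normalizer_carrier)
  have "induced M g = induced M h \<longleftrightarrow> (\<forall>x. g x \<in> orbitM M (h x))"
    by (simp add: induced_eq_iff_orbit_eq[OF g h] orbit_eq_iff)
  also have "\<dots> \<longleftrightarrow> (\<forall>y. (g \<circ> inv_aff h) y \<in> orbitM M y)"
  proof (intro iffI allI)
    fix y assume orbits: "\<forall>x. g x \<in> orbitM M (h x)"
    show "(g \<circ> inv_aff h) y \<in> orbitM M y"
      using orbits[rule_format, of "inv_aff h y"] hc by simp
  next
    fix x assume orbits: "\<forall>y. (g \<circ> inv_aff h) y \<in> orbitM M y"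
    show "g x \<in> orbitM M (h x)"
      using orbits[rule_format, of "h x"] hc by simp
  qed
  also have "\<dots> \<longleftrightarrow> g \<circ> inv_aff h \<in> M"
  proof -
    have "g \<circ> inv_aff h \<in> carrier AffGroup"
      using AG.m_closed[OF gc AG.inv_closed[OF hc]] by simp
    then show ?thesis
      using orbit_preserving mem_orbitI[of "g \<circ> inv_aff h"]
      by (auto simp: orbit_preserving_affinities_def)
  qed
  finally show ?thesis .
qed

(* Omega chooses its representative with SOME; any two representatives differ by an element of M. *)
lemma Omega_induced:
  assumes orbit_preserving: "orbit_preserving_affinities M \<subseteq> M"
    and g: "g \<in> normalizerA M"
  shows "Omega M (induced M g) = outer_class g"
proof -
  define g' where "g' = (SOME g'. g' \<in> normalizerA M \<and> induced M g' = induced M g)"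
  have g': "g' \<in> normalizerA M" "induced M g' = induced M g"
    using someI[of "\<lambda>g'. g' \<in> normalizerA M \<and> induced M g' = induced M g", OF conjI[OF g refl]]
    by (simp_all add: g'_def)
  then have "g' \<circ> inv_aff g \<in> M"
    using induced_eq_iff[OF orbit_preserving g'(1) g] by simp
  then show ?thesis
    using outer_class_eqI[OF g'(1) g] by (simp add: Omega_def g'_def)
qed

theorem Omega_iso:
  assumes centralizer: "affine_centralizer M \<subseteq> {id}"
    and orbit_preserving: "orbit_preserving_affinities M \<subseteq> M"
    and automorphisms: "auto (MGroup M) \<subseteq> conjAut M ` normalizerA M"
  shows "Omega M \<in> iso (AffOrb M) (Out (MGroup M))"
proof -
  interpret Inn: normal "Inn (MGroup M)" "AutoGroup (MGroup M)"
    using group_MGroup by (rule group.Inn_normal)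
  have carrier_AffOrb: "carrier (AffOrb M) = induced M ` normalizerA M"
    by (simp add: AffOrb_def)
  have carrier_Out: "carrier (Out (MGroup M)) = outer_class ` normalizerA M"
    using automorphisms conjAut_in_AutoGroup
    by (auto simp: Out_def FactGroup_def RCOSETS_def AutoGroup_def)
  have Omega: "\<And>g. g \<in> normalizerA M \<Longrightarrow> Omega M (induced M g) = outer_class g"
    using orbit_preserving by (rule Omega_induced)
  have "Omega M \<in> hom (AffOrb M) (Out (MGroup M))"
  proof (rule homI)
    fix x y assume "x \<in> carrier (AffOrb M)" "y \<in> carrier (AffOrb M)"
    then obtain g h where g: "g \<in> normalizerA M" "x = induced M g"
      and h: "h \<in> normalizerA M" "y = induced M h"
      using carrier_AffOrb by auto
    have "Omega M (x \<otimes>\<^bsub>AffOrb M\<^esub> y) = outer_class (g \<circ> h)"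
      using g h by (simp add: AffOrb_def induced_compose Omega normalizer_comp_closed)
    also have "\<dots> = outer_class g <#>\<^bsub>AutoGroup (MGroup M)\<^esub> outer_class h"
      using g h by (simp add: Inn.rcos_sum conjAut_in_AutoGroup conjAut_compose)
    also have "\<dots> = Omega M x \<otimes>\<^bsub>Out (MGroup M)\<^esub> Omega M y"
      using g h by (simp add: Omega Out_def FactGroup_def)
    finally show "Omega M (x \<otimes>\<^bsub>AffOrb M\<^esub> y) = Omega M x \<otimes>\<^bsub>Out (MGroup M)\<^esub> Omega M y" .
  qed (use carrier_AffOrb carrier_Out Omega in auto)
  moreover have "inj_on (Omega M) (carrier (AffOrb M))"
    using carrier_AffOrb Omega outer_class_eq_iff[OF centralizer]
      induced_eq_iff[OF orbit_preserving]
    by (auto simp: inj_on_def)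
  moreover have "Omega M ` carrier (AffOrb M) = carrier (Out (MGroup M))"
    using carrier_AffOrb carrier_Out Omega by (auto simp: image_image cong: image_cong)
  ultimately show ?thesis
    by (simp add: iso_def bij_betw_def)
qed

end

section \<open>The wallpaper group p2\<close>

definition Z2 :: "(real^2) set" where
  "Z2 = {v. v$1 \<in> \<int> \<and> v$2 \<in> \<int>}"

definition homothety :: "real \<Rightarrow> real^2 \<Rightarrow> real^2 \<Rightarrow> real^2" where
  "homothety s v = (\<lambda>x. s *\<^sub>R x + v)"

definition p2_maps :: "(real^2 \<Rightarrow> real^2) set" where
  "p2_maps = {homothety s v | s v. (s = 1 \<or> s = -1) \<and> v \<in> Z2}"

lemma Z2_add: "v \<in> Z2 \<Longrightarrow> w \<in> Z2 \<Longrightarrow> v + w \<in> Z2"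
  and Z2_diff: "v \<in> Z2 \<Longrightarrow> w \<in> Z2 \<Longrightarrow> v - w \<in> Z2"
  and Z2_uminus: "v \<in> Z2 \<Longrightarrow> - v \<in> Z2"
  and zero_in_Z2: "0 \<in> Z2" and e1_in_Z2: "e1 \<in> Z2" and e2_in_Z2: "e2 \<in> Z2"
  by (auto simp: Z2_def)

lemma Z2_norm_less_one:
  assumes "v \<in> Z2" and "norm v < 1"
  shows "v = 0"
proof -
  have "v$i = 0" if "i = 1 \<or> i = 2" for i
    using assms that component_le_norm_cart[of v i]
    by (intro Ints_nonzero_abs_less1) (auto simp: Z2_def)
  then show ?thesis
    by (simp add: vec2_eq_iff)
qed

lemma homothety_compose: "homothety s v \<circ> homothety t w = homothety (s * t) (s *\<^sub>R w + v)"
  by (simp add: homothety_def fun_eq_iff algebra_simps)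

lemma homothety_eq_iff: "homothety s v = homothety t w \<longleftrightarrow> s = t \<and> v = w"
proof
  assume eq: "homothety s v = homothety t w"
  have "v = w"
    using fun_cong[OF eq, of 0] by (simp add: homothety_def)
  moreover have "s = t"
    using fun_cong[OF eq, of e1] \<open>v = w\<close> by (simp add: homothety_def vec2_eq_iff)
  ultimately show "s = t \<and> v = w"
    by simp
qed simp

lemma homothety_1_0: "homothety 1 0 = id"
  by (simp add: homothety_def fun_eq_iff)

lemma homothety_eq_aff: "homothety s v = aff v (s *\<^sub>R mat 1)"
  by (simp add: homothety_def aff_def fun_eq_iff vec2_eq_iff matrix_vector_mult_nth_2 mat_def)

lemma homothety_in_AffGroup: "s \<noteq> 0 \<Longrightarrow> homothety s v \<in> carrier AffGroup"
  using scalar_invertible[of s "mat 1 :: real^2^2"]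
  by (auto simp: homothety_eq_aff carrier_AffGroup invertible_def)

lemma inv_aff_homothety:
  "s = 1 \<or> s = -1 \<Longrightarrow> inv_aff (homothety s v) = homothety s (- (s *\<^sub>R v))"
  by (rule AG.inv_equality) (auto simp: homothety_compose homothety_1_0 homothety_in_AffGroup)

lemma homothety_in_p2_maps: "s = 1 \<or> s = -1 \<Longrightarrow> v \<in> Z2 \<Longrightarrow> homothety s v \<in> p2_maps"
  unfolding p2_maps_def by blast

lemma p2_mapsE:
  assumes "m \<in> p2_maps"
  obtains s v where "m = homothety s v" "s = 1 \<or> s = -1" "v \<in> Z2"
  using assms by (auto simp: p2_maps_def)

lemma subgroup_p2_maps: "subgroup p2_maps AffGroup"
proof (rule AG.subgroupI)
  show "p2_maps \<subseteq> carrier AffGroup"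
    by (auto simp: p2_maps_def intro!: homothety_in_AffGroup)
  show "p2_maps \<noteq> {}"
    using homothety_in_p2_maps zero_in_Z2 by blast
next
  fix m assume "m \<in> p2_maps"
  then show "inv_aff m \<in> p2_maps"
    by (auto elim!: p2_mapsE simp: inv_aff_homothety intro!: homothety_in_p2_maps Z2_uminus)
next
  fix m n assume "m \<in> p2_maps" "n \<in> p2_maps"
  then show "m \<otimes>\<^bsub>AffGroup\<^esub> n \<in> p2_maps"
    by (auto elim!: p2_mapsE simp: homothety_compose intro!: homothety_in_p2_maps Z2_add Z2_diff)
qed

interpretation p2: affine_subgroup p2_maps
  using subgroup_p2_maps by (rule affine_subgroup.intro)

lemma translation_multiple_mem:
  assumes H: "subgroup H AffGroup" and u: "homothety 1 u \<in> H"
  shows "homothety 1 (of_int n *\<^sub>R u) \<in> H"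
proof (induction n rule: int_induct[where k = 0])
  case base
  then show ?case
    using subgroup.one_closed[OF H] by (simp add: homothety_1_0 id_def)
next
  case (step1 i)
  have "homothety 1 (of_int (i + 1) *\<^sub>R u) = homothety 1 u \<otimes>\<^bsub>AffGroup\<^esub> homothety 1 (of_int i *\<^sub>R u)"
    by (simp add: homothety_compose algebra_simps)
  then show ?case
    using subgroup.m_closed[OF H u step1(2)] by (simp only:)
next
  case (step2 i)
  have "homothety 1 (of_int (i - 1) *\<^sub>R u)
      = inv_aff (homothety 1 u) \<otimes>\<^bsub>AffGroup\<^esub> homothety 1 (of_int i *\<^sub>R u)"
    by (simp add: inv_aff_homothety homothety_compose algebra_simps)
  then show ?case
    using subgroup.m_closed[OF H subgroup.m_inv_closed[OF H u] step2(2)] by (simp only:)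
qed

lemma Mp2_generators:
  "{aff e1 (mat 1), aff e2 (mat 1), aff 0 (- mat 1)}
    = {homothety 1 e1, homothety 1 e2, homothety (-1) 0}"
  by (simp add: homothety_eq_aff)

lemma Mp2_eq_p2_maps: "Mp2 = p2_maps"
proof
  show "Mp2 \<subseteq> p2_maps"
    unfolding Mp2_def Mp2_generators
    by (rule AG.generate_subgroup_incl)
      (auto intro!: homothety_in_p2_maps subgroup_p2_maps simp: zero_in_Z2 e1_in_Z2 e2_in_Z2)
  have Mp2: "subgroup Mp2 AffGroup"
    unfolding Mp2_def Mp2_generators
    by (rule AG.generate_is_subgroup) (auto intro!: homothety_in_AffGroup)
  have gens: "homothety 1 e1 \<in> Mp2" "homothety 1 e2 \<in> Mp2" "homothety (-1) 0 \<in> Mp2"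
    unfolding Mp2_def Mp2_generators by (auto intro: generate.incl)
  show "p2_maps \<subseteq> Mp2"
  proof
    fix m assume "m \<in> p2_maps"
    then obtain s v where m: "m = homothety s v" "s = 1 \<or> s = -1" "v \<in> Z2"
      by (rule p2_mapsE)
    obtain n1 n2 where "v$1 = of_int n1" "v$2 = of_int n2"
      using m(3) by (auto simp: Z2_def elim!: Ints_cases)
    then have "homothety 1 v = homothety 1 (of_int n1 *\<^sub>R e1) \<circ> homothety 1 (of_int n2 *\<^sub>R e2)"
      by (simp add: homothety_compose homothety_eq_iff vec2_eq_iff)
    then have translation: "homothety 1 v \<in> Mp2"
      using subgroup.m_closed[OF Mp2] translation_multiple_mem[OF Mp2] gens by fastforce
    have "homothety (-1) v = homothety 1 v \<circ> homothety (-1) 0"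
      by (simp add: homothety_compose)
    then have "homothety (-1) v \<in> Mp2"
      using subgroup.m_closed[OF Mp2 translation gens(3)] by simp
    then show "m \<in> Mp2"
      using m translation by auto
  qed
qed

lemma affine_centralizer_p2_maps: "affine_centralizer p2_maps \<subseteq> {id}"
proof
  fix k assume "k \<in> affine_centralizer p2_maps"
  then have k: "k \<in> carrier AffGroup" and commutes: "\<And>m. m \<in> p2_maps \<Longrightarrow> k \<circ> m = m \<circ> k"
    by (auto simp: affine_centralizer_def)
  obtain a A where k_apply: "\<And>x. k x = a + A *v x"
    using k by (auto simp: carrier_AffGroup aff_def)
  have "(k \<circ> homothety (-1) 0) 0 = (homothety (-1) 0 \<circ> k) 0"
    "(k \<circ> homothety 1 e1) 0 = (homothety 1 e1 \<circ> k) 0"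
    "(k \<circ> homothety 1 e2) 0 = (homothety 1 e2 \<circ> k) 0"
    using commutes homothety_in_p2_maps zero_in_Z2 e1_in_Z2 e2_in_Z2 by simp_all
  then have "a = - a" "A *v e1 = e1" "A *v e2 = e2"
    by (simp_all add: k_apply homothety_def)
  then show "k \<in> {id}"
    by (simp add: fun_eq_iff k_apply vec2_eq_iff matrix_vector_mult_nth_2)
qed

lemma orbit_p2_maps_iff:
  "y \<in> orbitM p2_maps x \<longleftrightarrow> (\<exists>s v. (s = 1 \<or> s = -1) \<and> v \<in> Z2 \<and> y = s *\<^sub>R x + v)"
proof
  assume "y \<in> orbitM p2_maps x"
  then show "\<exists>s v. (s = 1 \<or> s = -1) \<and> v \<in> Z2 \<and> y = s *\<^sub>R x + v"
    by (auto simp: orbitM_def homothety_def elim!: p2_mapsE)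
next
  assume "\<exists>s v. (s = 1 \<or> s = -1) \<and> v \<in> Z2 \<and> y = s *\<^sub>R x + v"
  then obtain s v where "s = 1 \<or> s = -1" "v \<in> Z2" "y = homothety s v x"
    by (auto simp: homothety_def)
  then show "y \<in> orbitM p2_maps x"
    using p2.mem_orbitI homothety_in_p2_maps by simp
qed

lemma orbit_preserving_eigenvector:
  assumes k_apply: "\<And>x. k x = a + A *v x" and orbits: "\<And>y. k y \<in> orbitM p2_maps y"
  shows "\<exists>s. (s = 1 \<or> s = -1) \<and> A *v u = s *\<^sub>R u"
proof -
  have "k 0 \<in> Z2"
    using orbits[of 0] by (auto simp: orbit_p2_maps_iff)
  then have a: "a \<in> Z2"
    by (simp add: k_apply)
  define C where "C = norm (A *v u) + norm u"
  define t where "t = 1 / (1 + C)"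
  have "C \<ge> 0"
    by (simp add: C_def)
  then have t: "t > 0" "t * C < 1"
    by (simp_all add: t_def field_simps)
  obtain s v where s: "s = 1 \<or> s = -1" and "v \<in> Z2" and "k (t *\<^sub>R u) = s *\<^sub>R t *\<^sub>R u + v"
    using orbits[of "t *\<^sub>R u"] by (auto simp: orbit_p2_maps_iff)
  then have "t *\<^sub>R (A *v u - s *\<^sub>R u) = v - a" "v - a \<in> Z2"
    using a by (auto simp: k_apply algebra_simps intro: Z2_diff)
  moreover have "norm (t *\<^sub>R (A *v u - s *\<^sub>R u)) < 1"
  proof -
    have "norm (A *v u - s *\<^sub>R u) \<le> C"
      using s norm_triangle_ineq4[of "A *v u" "s *\<^sub>R u"] by (auto simp: C_def)
    then have "t * norm (A *v u - s *\<^sub>R u) \<le> t * C"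
      using t by (simp add: mult_left_mono)
    then show ?thesis
      using t by (simp only: norm_scaleR abs_of_pos)
  qed
  ultimately have "t *\<^sub>R (A *v u - s *\<^sub>R u) = 0"
    using Z2_norm_less_one by metis
  then show ?thesis
    using s t by auto
qed

lemma orbit_preserving_affinities_p2_maps: "orbit_preserving_affinities p2_maps \<subseteq> p2_maps"
proof
  fix k assume "k \<in> orbit_preserving_affinities p2_maps"
  then have k: "k \<in> carrier AffGroup" and orbits: "\<And>y. k y \<in> orbitM p2_maps y"
    by (auto simp: orbit_preserving_affinities_def)
  obtain a A where k_apply: "\<And>x. k x = a + A *v x"
    using k by (auto simp: carrier_AffGroup aff_def)
  have "k 0 \<in> Z2"
    using orbits[of 0] by (auto simp: orbit_p2_maps_iff)
  then have a: "a \<in> Z2"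
    by (simp add: k_apply)
  obtain s1 s2 s3 where s1: "s1 = 1 \<or> s1 = -1" "A *v e1 = s1 *\<^sub>R e1"
    and "A *v e2 = s2 *\<^sub>R e2" "A *v (e1 + e2) = s3 *\<^sub>R (e1 + e2)"
    using orbit_preserving_eigenvector[OF k_apply orbits] by metis
  then have "A$1$1 = s1" "A$2$1 = 0" "A$1$2 = 0" "A$2$2 = s1"
    by (auto simp: vec2_eq_iff matrix_vector_mult_nth_2)
  then have "k = homothety s1 a"
    by (simp add: fun_eq_iff k_apply homothety_def vec2_eq_iff matrix_vector_mult_nth_2)
  then show "k \<in> p2_maps"
    using s1 a by (simp add: homothety_in_p2_maps)
qed

lemma homothety_involution_iff:
  "s = 1 \<or> s = -1 \<Longrightarrow> homothety s v \<circ> homothety s v = id \<longleftrightarrow> s = -1 \<or> v = 0"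
  by (auto simp: homothety_compose homothety_1_0[symmetric] homothety_eq_iff vec2_eq_iff)

lemma p2_auto_translation:
  assumes \<phi>: "\<phi> \<in> auto (MGroup p2_maps)" and u: "u \<in> Z2" "u \<noteq> 0"
  shows "\<exists>c\<in>Z2. \<phi> (homothety 1 u) = homothety 1 c"
proof -
  have tu: "homothety 1 u \<in> p2_maps"
    using u by (simp add: homothety_in_p2_maps)
  then obtain s c where \<phi>u: "\<phi> (homothety 1 u) = homothety s c" "s = 1 \<or> s = -1" "c \<in> Z2"
    using auto_MGroup_closed[OF \<phi>] p2_mapsE by metis
  have "\<not> (\<phi> (homothety 1 u) \<circ> \<phi> (homothety 1 u) = id)"
    using group.auto_square_eq_one_iff[OF p2.group_MGroup \<phi>] tu u homothety_involution_iff[of 1 u]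
    by simp
  then show ?thesis
    using \<phi>u homothety_involution_iff[of s c] by auto
qed

lemma p2_auto_half_turn:
  assumes \<phi>: "\<phi> \<in> auto (MGroup p2_maps)"
  shows "\<exists>b\<in>Z2. \<phi> (homothety (-1) 0) = homothety (-1) b"
proof -
  have r: "homothety (-1) 0 \<in> p2_maps"
    using zero_in_Z2 by (simp add: homothety_in_p2_maps)
  then obtain s b where \<phi>r: "\<phi> (homothety (-1) 0) = homothety s b" "s = 1 \<or> s = -1" "b \<in> Z2"
    using auto_MGroup_closed[OF \<phi>] p2_mapsE by metis
  have "\<phi> (homothety (-1) 0) \<circ> \<phi> (homothety (-1) 0) = id"
    using group.auto_square_eq_one_iff[OF p2.group_MGroup \<phi>] r homothety_involution_iff[of "-1" 0]
    by simp
  moreover have "\<phi> (homothety (-1) 0) \<noteq> id"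
    using group.auto_eq_one_iff[OF p2.group_MGroup \<phi>] r homothety_1_0
      homothety_eq_iff[of "-1" 0 1 0]
    by simp
  ultimately show ?thesis
    using \<phi>r homothety_involution_iff[of s b] homothety_1_0 by auto
qed

text \<open>The conjugate of a map with scalar linear part by \<open>x \<mapsto> a + A x\<close>, written
  without inverting \<open>A\<close>.\<close>
definition homothety_conj :: "real^2 \<Rightarrow> real^2^2 \<Rightarrow> (real^2 \<Rightarrow> real^2) \<Rightarrow> (real^2 \<Rightarrow> real^2)" where
  "homothety_conj a A m = (\<lambda>x. a + A *v m 0 + (m (x - a) - m 0))"

lemma homothety_conj_homothety:
  "homothety_conj a A (homothety s v) = homothety s (a + A *v v - s *\<^sub>R a)"
  by (simp add: homothety_conj_def homothety_def fun_eq_iff algebra_simps)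

lemma aff_comp_homothety:
  "aff a A \<circ> homothety s v = homothety_conj a A (homothety s v) \<circ> aff a A"
  unfolding homothety_conj_homothety
  by (simp add: aff_def homothety_def fun_eq_iff algebra_simps)

lemma homothety_conj_hom: "homothety_conj a A \<in> hom (MGroup p2_maps) AffGroup"
proof (rule homI)
  fix m assume "m \<in> carrier (MGroup p2_maps)"
  then show "homothety_conj a A m \<in> carrier AffGroup"
    by (auto elim!: p2_mapsE simp: homothety_conj_homothety intro!: homothety_in_AffGroup)
next
  fix m n assume "m \<in> carrier (MGroup p2_maps)" "n \<in> carrier (MGroup p2_maps)"
  then show "homothety_conj a A (m \<otimes>\<^bsub>MGroup p2_maps\<^esub> n)
      = homothety_conj a A m \<otimes>\<^bsub>AffGroup\<^esub> homothety_conj a A n"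
    by (auto elim!: p2_mapsE simp: homothety_compose homothety_conj_homothety homothety_eq_iff
        algebra_simps)
qed

lemma p2_auto_eq_homothety_conj:
  assumes \<phi>: "\<phi> \<in> auto (MGroup p2_maps)"
  obtains a A where "\<And>m. m \<in> p2_maps \<Longrightarrow> \<phi> m = homothety_conj a A m"
proof -
  obtain c1 c2 b
    where c: "\<phi> (homothety 1 e1) = homothety 1 c1" "\<phi> (homothety 1 e2) = homothety 1 c2"
    and b: "\<phi> (homothety (-1) 0) = homothety (-1) b"
    using p2_auto_translation[OF \<phi>] p2_auto_half_turn[OF \<phi>] e1_in_Z2 e2_in_Z2 e1_neq_0 e2_neq_0
    by metis
  define A :: "real^2^2" where "A = (\<chi> i j. if j = 1 then c1$i else c2$i)"
  define a where "a = (1/2) *\<^sub>R b"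
  have gens: "\<phi> g = homothety_conj a A g"
    if "g \<in> {homothety 1 e1, homothety 1 e2, homothety (-1) 0}" for g
    using that c b by (auto simp: homothety_conj_homothety homothety_eq_iff a_def A_def vec2_eq_iff
        matrix_vector_mult_nth_2)
  have \<phi>_hom: "\<phi> \<in> hom (MGroup p2_maps) AffGroup"
    using \<phi> p2.mem_carrier by (auto simp: auto_def hom_def)
  have S: "{homothety 1 e1, homothety 1 e2, homothety (-1) 0} \<subseteq> p2_maps"
    using zero_in_Z2 e1_in_Z2 e2_in_Z2 by (auto intro: homothety_in_p2_maps)
  have generate:
    "generate (MGroup p2_maps) {homothety 1 e1, homothety 1 e2, homothety (-1) 0} = p2_maps"
    using AG.generate_consistent[OF S subgroup_p2_maps] Mp2_eq_p2_maps
    by (simp add: MGroup_def Mp2_def Mp2_generators)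
  have "\<phi> m = homothety_conj a A m" if "m \<in> p2_maps" for m
    by (rule group.hom_eq_on_generate[OF p2.group_MGroup group_AffGroup \<phi>_hom homothety_conj_hom,
          where S = "{homothety 1 e1, homothety 1 e2, homothety (-1) 0}"])
      (use S gens generate that in auto)
  then show ?thesis
    using that by blast
qed

lemma invertible_if_auto_eq_homothety_conj:
  assumes \<phi>: "\<phi> \<in> auto (MGroup p2_maps)"
    and conj: "\<And>m. m \<in> p2_maps \<Longrightarrow> \<phi> m = homothety_conj a A m"
  shows "invertible A"
proof -
  have preimage: "\<exists>v. A *v v = u" if "u \<in> Z2" for u
  proof -
    have "homothety 1 u \<in> \<phi> ` p2_maps"
      using \<phi> that homothety_in_p2_maps by (auto simp: auto_def Bij_def bij_betw_def)
    then obtain m where m: "m \<in> p2_maps" "\<phi> m = homothety 1 u"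
      by auto
    then obtain s v where "m = homothety s v"
      by (auto elim: p2_mapsE)
    then have "homothety s (a + A *v v - s *\<^sub>R a) = homothety 1 u"
      using m conj by (simp add: homothety_conj_homothety)
    then show ?thesis
      by (auto simp: homothety_eq_iff)
  qed
  obtain v w where v: "A *v v = e1" and w: "A *v w = e2"
    using preimage e1_in_Z2 e2_in_Z2 by metis
  have "surj (\<lambda>x. A *v x)"
    unfolding surj_def
  proof
    fix y :: "real^2"
    have "y = y$1 *\<^sub>R e1 + y$2 *\<^sub>R e2"
      by (simp add: vec2_eq_iff)
    also have "\<dots> = A *v (y$1 *\<^sub>R v + y$2 *\<^sub>R w)"
      using v w by (simp add: matrix_vector_right_distrib matrix_vector_mult_scaleR)
    finally show "\<exists>x. y = A *v x"
      by blast
  qed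
  then show ?thesis
    using invertible_right_inverse matrix_right_invertible_surjective by blast
qed

lemma auto_p2_maps_eq_conjAut: "auto (MGroup p2_maps) \<subseteq> conjAut p2_maps ` normalizerA p2_maps"
proof
  fix \<phi> assume \<phi>: "\<phi> \<in> auto (MGroup p2_maps)"
  obtain a A where conj: "\<And>m. m \<in> p2_maps \<Longrightarrow> \<phi> m = homothety_conj a A m"
    using p2_auto_eq_homothety_conj[OF \<phi>] by blast
  define g where "g = aff a A"
  have g: "g \<in> carrier AffGroup"
    using invertible_if_auto_eq_homothety_conj[OF \<phi> conj] by (auto simp: g_def carrier_AffGroup)
  have conj_g: "g \<circ> m \<circ> inv_aff g = \<phi> m" if "m \<in> p2_maps" for m
  proof -
    have "g \<circ> m = \<phi> m \<circ> g"
      using that conj by (auto elim!: p2_mapsE simp: g_def aff_comp_homothety)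
    then have "g \<circ> m \<circ> inv_aff g = \<phi> m \<circ> (g \<circ> inv_aff g)"
      by (simp add: comp_assoc)
    then show ?thesis
      using g by (simp add: fun_eq_iff)
  qed
  have "(\<lambda>m. g \<circ> m \<circ> inv_aff g) ` p2_maps = \<phi> ` p2_maps"
    using conj_g by simp
  also have "\<dots> = p2_maps"
    using \<phi> by (auto simp: auto_def Bij_def bij_betw_def)
  finally have "g \<in> normalizerA p2_maps"
    using g by (simp add: normalizerA_def)
  moreover have "\<phi> = conjAut p2_maps g"
  proof (rule extensionalityI)
    show "\<phi> \<in> extensional p2_maps"
      using \<phi> by (simp add: auto_def Bij_def)
  qed (simp_all add: conjAut_def conj_g)
  ultimately show "\<phi> \<in> conjAut p2_maps ` normalizerA p2_maps"
    by blast
qed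

theorem lemma19:
  shows "Omega Mp2 \<in> iso (AffOrb Mp2) (Out (MGroup Mp2))"
  unfolding Mp2_eq_p2_maps
  using affine_centralizer_p2_maps orbit_preserving_affinities_p2_maps auto_p2_maps_eq_conjAut
  by (rule p2.Omega_iso)

end
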